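(* The set $\mathcal{P}_{\mathrm{fin}}(I)$ of finite subsets of $I$ is a quantifier-free definable subset of the structure $\mathcal{L}(I)$.
   Context: Let $I$ be a dense linear order with left endpoint $0$ and no right endpoint. Let $\mathcal{P}_{\mathrm{fci}}(I)$ be the set of finite unions of closed intervals $[i,j]$, $[i,+\infty)$, $(-\infty,j]$ of $I$. $\mathcal{L}(I)$ is the structure with universe $\mathcal{P}_{\mathrm{fci}}(I)$ in the signature $\{\cup,\cap,\bot,c_0,\min,\max,l,r\}$, interpreted as follows. - $\cup$ and $\cap$ are union and intersection. - $\bot$ is $\emptyset$, and $c_0$ is $\{0\}$. - $\min(A)$ is the singleton of the least element of $A$, with $\min(\emptyset)=\emptyset$. - $\max(A)$ is the singleton of the greatest element when $A$ is nonempty and bounded, and $\emptyset$ otherwise. - $l(A)$ and $r(A)$ are the sets of left and right endpoints of $A$. Left endpoints are the minima of the maximal closed intervals composing $A$. Right endpoints are the maxima of the bounded ones. *)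

theory Defs
  imports Main
begin

text \<open>The dense linear order I is the universe of a linorder type 'a; its left
endpoint 0 is a parameter z0 (assumed least).\<close>

definition closed_int :: "'a::linorder set \<Rightarrow> bool" where
  "closed_int J \<longleftrightarrow> (\<exists>i j. i \<le> j \<and> J = {i..j}) \<or> (\<exists>i. J = {i..}) \<or> (\<exists>j. J = {..j})"

definition fci :: "'a::linorder set set" where
  "fci = {A. \<exists>F. finite F \<and> (\<forall>J\<in>F. closed_int J) \<and> A = \<Union>F}"

definition max_int :: "'a::linorder set \<Rightarrow> 'a set \<Rightarrow> bool" where
  "max_int A J \<longleftrightarrow> closed_int J \<and> J \<subseteq> A \<and>
     (\<forall>K. closed_int K \<and> J \<subseteq> K \<and> K \<subseteq> A \<longrightarrow> K = J)"

definition lend :: "'a::linorder set \<Rightarrow> 'a set" where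
  "lend A = {i. \<exists>J. max_int A J \<and> i \<in> J \<and> (\<forall>x\<in>J. i \<le> x)}"

definition rend :: "'a::linorder set \<Rightarrow> 'a set" where
  "rend A = {j. \<exists>J. max_int A J \<and> j \<in> J \<and> (\<forall>x\<in>J. x \<le> j)}"

definition minS :: "'a::linorder set \<Rightarrow> 'a set" where
  "minS A = (if A = {} then {} else {LEAST x. x \<in> A})"

definition maxS :: "'a::linorder set \<Rightarrow> 'a set" where
  "maxS A = (if A \<noteq> {} \<and> bdd_above A then {GREATEST x. x \<in> A} else {})"

datatype tm = Var | Bot | C0 | Cup tm tm | Cap tm tm | Mn tm | Mx tm | Lt tm | Rt tm

datatype qf = Eq tm tm | Neg qf | Conj qf qf | Disj qf qf

fun tval :: "'a::linorder \<Rightarrow> 'a set \<Rightarrow> tm \<Rightarrow> 'a set" where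
  "tval z A Var = A"
| "tval z A Bot = {}"
| "tval z A C0 = {z}"
| "tval z A (Cup s t) = tval z A s \<union> tval z A t"
| "tval z A (Cap s t) = tval z A s \<inter> tval z A t"
| "tval z A (Mn t) = minS (tval z A t)"
| "tval z A (Mx t) = maxS (tval z A t)"
| "tval z A (Lt t) = lend (tval z A t)"
| "tval z A (Rt t) = rend (tval z A t)"

fun holds :: "'a::linorder \<Rightarrow> 'a set \<Rightarrow> qf \<Rightarrow> bool" where
  "holds z A (Eq s t) = (tval z A s = tval z A t)"
| "holds z A (Neg p) = (\<not> holds z A p)"
| "holds z A (Conj p q) = (holds z A p \<and> holds z A q)"
| "holds z A (Disj p q) = (holds z A p \<or> holds z A q)"

end

theory Submission
  imports Defs
begin

text \<open>The defining formula is l(A) = A. If A is finite, density forces every closed interval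
inside A to be a single point, so each x in A is the left endpoint of the maximal interval
[x,x]. If A is infinite, one of its finitely many closed intervals contains some [a,x] with
a < x; then x is not the least point of any maximal interval K inside A, since K \<union> [a,x]
would be a strictly larger closed interval inside A.\<close>

lemma infinite_Icc_if_dense:
  fixes x y :: "'a::linorder"
  assumes dense: "\<forall>x y::'a. x < y \<longrightarrow> (\<exists>z. x < z \<and> z < y)" and "x < y"
  shows "infinite {x..y}"
proof
  assume "finite {x..y}"
  then have fin: "finite {x<..y}" by (rule finite_subset[rotated]) auto
  have "y \<in> {x<..y}" using \<open>x < y\<close> by simp
  then have m: "Min {x<..y} \<in> {x<..y}" using fin by (intro Min_in) auto
  then obtain z where "x < z" "z < Min {x<..y}" using dense by auto
  moreover have "z \<in> {x<..y}" using calculation m by auto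
  ultimately show False using Min_le[OF fin] by fastforce
qed

lemma closed_int_Icc_subset:
  assumes "closed_int J" "a \<in> J" "b \<in> J"
  shows "{a..b} \<subseteq> J"
  using assms unfolding closed_int_def by auto

lemma closed_int_finite_subsingleton:
  fixes K :: "'a::linorder set"
  assumes dense: "\<forall>x y::'a. x < y \<longrightarrow> (\<exists>z. x < z \<and> z < y)"
    and "closed_int K" "finite K" "x \<in> K" "y \<in> K"
  shows "x = y"
proof (rule ccontr)
  assume "x \<noteq> y"
  then obtain u v where "u < v" "{u..v} \<subseteq> K"
    using closed_int_Icc_subset[OF \<open>closed_int K\<close>] assms(4,5) by (metis linorder_neq_iff)
  then show False
    using infinite_Icc_if_dense[OF dense] \<open>finite K\<close> finite_subset by blast
qed

lemma closed_int_Un_Icc_left: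
  assumes "closed_int K" "x \<in> K" "\<forall>y\<in>K. x \<le> y" "a \<le> x"
  shows "closed_int (K \<union> {a..x})"
  using assms(1) unfolding closed_int_def[of K]
proof (elim disjE exE conjE)
  fix i j assume "i \<le> j" "K = {i..j}"
  with assms(2,3) have "i = x" by (auto intro: order.antisym)
  with \<open>K = {i..j}\<close> \<open>i \<le> j\<close> assms(4) have "K \<union> {a..x} = {a..j}" "a \<le> j"
    by (auto simp: ivl_disj_un)
  then show ?thesis unfolding closed_int_def by blast
next
  fix i assume "K = {i..}"
  with assms(2,3) have "i = x" by (auto intro: order.antisym)
  with \<open>K = {i..}\<close> assms(4) have "K \<union> {a..x} = {a..}" by (auto simp: ivl_disj_un)
  then show ?thesis unfolding closed_int_def by blast
next
  fix j assume "K = {..j}"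
  with assms(2) have "K \<union> {a..x} = K" by auto
  then show ?thesis using assms(1) by simp
qed

lemma lend_subset: "lend A \<subseteq> A"
  unfolding lend_def max_int_def by auto

lemma max_int_singleton_if_finite:
  fixes A :: "'a::linorder set"
  assumes dense: "\<forall>x y::'a. x < y \<longrightarrow> (\<exists>z. x < z \<and> z < y)"
    and "finite A" "x \<in> A"
  shows "max_int A {x}"
  unfolding max_int_def
proof (intro conjI allI impI)
  show "closed_int {x}" unfolding closed_int_def by (metis atLeastAtMost_singleton order.refl)
  show "{x} \<subseteq> A" using \<open>x \<in> A\<close> by simp
next
  fix K assume K: "closed_int K \<and> {x} \<subseteq> K \<and> K \<subseteq> A"
  then have "finite K" using \<open>finite A\<close> finite_subset by blast
  then show "K = {x}"
    using K closed_int_finite_subsingleton[OF dense] by blast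
qed

lemma lend_eq_if_finite:
  fixes A :: "'a::linorder set"
  assumes dense: "\<forall>x y::'a. x < y \<longrightarrow> (\<exists>z. x < z \<and> z < y)" and "finite A"
  shows "lend A = A"
proof
  show "A \<subseteq> lend A"
    using max_int_singleton_if_finite[OF dense \<open>finite A\<close>] unfolding lend_def by blast
qed (rule lend_subset)

lemma right_end_of_Icc_notin_lend:
  assumes "a < x" "{a..x} \<subseteq> A"
  shows "x \<notin> lend A"
proof
  assume "x \<in> lend A"
  then obtain K where K: "max_int A K" "x \<in> K" "\<forall>y\<in>K. x \<le> y"
    unfolding lend_def by auto
  have "closed_int K" using K(1) unfolding max_int_def by blast
  then have "closed_int (K \<union> {a..x})"
    using closed_int_Un_Icc_left K(2,3) less_imp_le[OF \<open>a < x\<close>] by blast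
  then have "K \<union> {a..x} = K"
    using K(1) \<open>{a..x} \<subseteq> A\<close> unfolding max_int_def by blast
  moreover have "a \<in> {a..x}" using \<open>a < x\<close> by simp
  ultimately have "a \<in> K" by blast
  then show False using K(3) \<open>a < x\<close> leD by blast
qed

lemma infinite_fci_contains_Icc:
  assumes "A \<in> fci" "infinite A"
  obtains a x where "a < x" "{a..x} \<subseteq> A"
proof -
  obtain F where F: "finite F" "\<forall>J\<in>F. closed_int J" "A = \<Union>F"
    using \<open>A \<in> fci\<close> unfolding fci_def by auto
  then obtain J where J: "J \<in> F" "infinite J" using \<open>infinite A\<close> by auto
  then obtain u where u: "u \<in> J" by (metis ex_in_conv finite.emptyI)
  have "infinite (J - {u})" using J(2) by simp
  then obtain v where v: "v \<in> J" "v \<noteq> u" by (metis DiffE ex_in_conv finite.emptyI singletonI)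
  then have "u < v \<or> v < u" by auto
  then obtain a x where "a < x" "a \<in> J" "x \<in> J" using u v(1) by blast
  then have "{a..x} \<subseteq> A" using closed_int_Icc_subset F J(1) by blast
  with \<open>a < x\<close> show thesis by (rule that)
qed

lemma fci_lend_eq_iff_finite:
  fixes A :: "'a::linorder set"
  assumes dense: "\<forall>x y::'a. x < y \<longrightarrow> (\<exists>z. x < z \<and> z < y)" and "A \<in> fci"
  shows "lend A = A \<longleftrightarrow> finite A"
proof
  assume eq: "lend A = A"
  show "finite A"
  proof (rule ccontr)
    assume "infinite A"
    then obtain a x where "a < x" "{a..x} \<subseteq> A"
      using infinite_fci_contains_Icc \<open>A \<in> fci\<close> by blast
    moreover from calculation have "x \<in> A" by auto
    ultimately show False using right_end_of_Icc_notin_lend eq by blast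
  qed
qed (rule lend_eq_if_finite[OF dense])

theorem proposition5p1:
  fixes z0 :: "'a::linorder"
  assumes dense: "\<forall>x y::'a. x < y \<longrightarrow> (\<exists>z. x < z \<and> z < y)"
    and left_endpoint: "\<forall>x. z0 \<le> x"
    and no_right_endpoint: "\<forall>x::'a. \<exists>y. x < y"
  shows "\<exists>\<phi>::qf. \<forall>A\<in>(fci :: 'a set set). holds z0 A \<phi> \<longleftrightarrow> finite A"
proof
  show "\<forall>A\<in>(fci :: 'a set set). holds z0 A (Eq Var (Lt Var)) \<longleftrightarrow> finite A"
    using fci_lend_eq_iff_finite[OF dense] by auto
qed

end
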